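(* Let $E\in(-2,2)$, $k=\arccos(-E/2)\in(0,\pi)$, let $w_\sigma$ be a compactly supported real random variable on a probability space $(\Sigma,\mathbb P)$, and let $$T^{\epsilon,\delta}_\sigma=\begin{pmatrix}e^{-\imath k}&0\\0&e^{\imath k}\end{pmatrix}\exp\Big[\frac{\imath\delta+\epsilon w_\sigma}{2\sin(k)}(B_2+B_3)\Big],\qquad \epsilon,\delta\in\mathbb R.$$ If $\delta\ne0$, or if $\epsilon\ne0$ and the support of $w_\sigma$ contains more than one point, then the semigroup generated by $\mathrm{supp}(T^{\epsilon,\delta}_\sigma)$ is not relatively compact.
   Context: $B_2=\begin{pmatrix}0&\imath\\-\imath&0\end{pmatrix}$, $B_3=\begin{pmatrix}\imath&0\\0&-\imath\end{pmatrix}$. $\mathrm{supp}(T^{\epsilon,\delta}_\sigma)\subset\mathrm{SL}(2,\mathbb C)$ is the support of the distribution of the random matrix; relative compactness refers to the topology of $\mathbb C^{2\times 2}$. *)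

theory Defs
  imports "HOL-Analysis.Analysis" "HOL-Probability.Probability"
begin

type_synonym cmat2 = "complex^2^2"

definition mat2 :: "complex \<Rightarrow> complex \<Rightarrow> complex \<Rightarrow> complex \<Rightarrow> cmat2" where
  "mat2 a b c d = (\<chi> i j. if i = 1 then (if j = 1 then a else b) else (if j = 1 then c else d))"

fun mpow :: "cmat2 \<Rightarrow> nat \<Rightarrow> cmat2" where
  "mpow A 0 = mat 1"
| "mpow A (Suc n) = A ** mpow A n"

definition mexp :: "cmat2 \<Rightarrow> cmat2" where
  "mexp A = (\<Sum>n. (1 / fact n) *\<^sub>R mpow A n)"

definition B2 :: cmat2 where "B2 = mat2 0 \<i> (- \<i>) 0"
definition B3 :: cmat2 where "B3 = mat2 \<i> 0 0 (- \<i>)"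

definition msmult :: "complex \<Rightarrow> cmat2 \<Rightarrow> cmat2" where
  "msmult c A = (\<chi> i j. c * A $ i $ j)"

text \<open>The transfer matrix as a function of the value x of the random variable.\<close>
definition Tmat :: "real \<Rightarrow> real \<Rightarrow> real \<Rightarrow> real \<Rightarrow> cmat2" where
  "Tmat E \<epsilon> \<delta> x = (let k = arccos (- E / 2) in
     mat2 (exp (- \<i> * of_real k)) 0 0 (exp (\<i> * of_real k)) **
     mexp (msmult ((\<i> * of_real \<delta> + of_real (\<epsilon> * x)) / of_real (2 * sin k)) (B2 + B3)))"

definition meas_support :: "'a::topological_space measure \<Rightarrow> 'a set" where
  "meas_support N = {x. \<forall>U. open U \<and> x \<in> U \<longrightarrow> emeasure N U > 0}"

inductive_set semigroup_gen :: "cmat2 set \<Rightarrow> cmat2 set" for S where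
  base: "x \<in> S \<Longrightarrow> x \<in> semigroup_gen S"
| mult: "x \<in> semigroup_gen S \<Longrightarrow> y \<in> semigroup_gen S \<Longrightarrow> x ** y \<in> semigroup_gen S"

end

theory Submission
  imports Defs
begin

(*
  If the closure of the semigroup G were compact, every element of that closure would have
  bounded powers, and the closure would also contain A B^-1 for all A, B in G: a subsequence
  of the powers B^n converges to a limit of determinant 1, so B^(n_(j+1) - n_j - 1) tends
  to B^-1.

  Since B2 + B3 is nilpotent, T(x) = D exp(c(x) (B2 + B3)) has determinant 1 and trace
  -E + eps x + i delta. If delta is nonzero the trace is not real, so T(x) has an eigenvalue
  off the unit circle and its powers are unbounded. Otherwise take a <> b in the support of w:
  T(a) T(b)^-1 is conjugate to exp((c(a) - c(b)) (B2 + B3)), a parabolic matrix A <> 1 whose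
  powers 1 + n (A - 1) grow linearly.
*)

section \<open>2x2 complex matrices\<close>

lemma mat2_nth [simp]:
  "mat2 a b c d $ 1 $ 1 = a" "mat2 a b c d $ 1 $ 2 = b"
  "mat2 a b c d $ 2 $ 1 = c" "mat2 a b c d $ 2 $ 2 = d"
  by (simp_all add: mat2_def)

lemma mat2_cases:
  obtains a b c d where "X = mat2 a b c d"
proof -
  have "X = mat2 (X$1$1) (X$1$2) (X$2$1) (X$2$2)"
    by (simp add: mat2_def vec_eq_iff forall_2)
  then show ?thesis using that by blast
qed

lemma mat2_mult:
  "mat2 a b c d ** mat2 a' b' c' d' =
   mat2 (a*a' + b*c') (a*b' + b*d') (c*a' + d*c') (c*b' + d*d')"
  by (simp add: vec_eq_iff forall_2 mat2_def matrix_matrix_mult_def UNIV_2)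

lemma mat2_one: "mat 1 = mat2 1 0 0 1"
  by (simp add: vec_eq_iff forall_2 mat2_def mat_def)

lemma mat2_zero: "0 = mat2 0 0 0 0"
  by (simp add: vec_eq_iff forall_2 mat2_def)

lemma mat2_add: "mat2 a b c d + mat2 a' b' c' d' = mat2 (a+a') (b+b') (c+c') (d+d')"
  by (simp add: vec_eq_iff forall_2 mat2_def)

lemma mat2_diff: "mat2 a b c d - mat2 a' b' c' d' = mat2 (a-a') (b-b') (c-c') (d-d')"
  by (simp add: vec_eq_iff forall_2 mat2_def)

lemma msmult_mat2: "msmult r (mat2 a b c d) = mat2 (r*a) (r*b) (r*c) (r*d)"
  by (simp add: vec_eq_iff forall_2 mat2_def msmult_def)

lemma det_mat2 [simp]: "det (mat2 a b c d) = a * d - b * c"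
  by (simp add: det_2)

lemma trace_mat2 [simp]: "trace (mat2 a b c d) = a + d"
  by (simp add: trace_def UNIV_2)

lemma norm_trace_le: "norm (trace X) \<le> 2 * norm (X :: cmat2)"
proof -
  have entry: "norm (X $ i $ i) \<le> norm X" for i
    using Finite_Cartesian_Product.norm_nth_le[of "X $ i" i]
      Finite_Cartesian_Product.norm_nth_le[of X i] by linarith
  have "trace X = X$1$1 + X$2$2"
    by (simp add: trace_def UNIV_2)
  then show ?thesis
    using norm_triangle_ineq[of "X$1$1" "X$2$2"] entry[of 1] entry[of 2] by simp
qed

lemma matrix_add_rdistrib:
  fixes A B :: "'a::semiring_1^'n^'m" and C :: "'a^'p^'n"
  shows "(A + B) ** C = A ** C + B ** C"
  by (simp add: matrix_matrix_mult_def vec_eq_iff sum.distrib algebra_simps)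

lemma tendsto_mat2:
  assumes "(f \<longlongrightarrow> a) F" "(g \<longlongrightarrow> b) F" "(h \<longlongrightarrow> c) F" "(l \<longlongrightarrow> d) F"
  shows "((\<lambda>x. mat2 (f x) (g x) (h x) (l x)) \<longlongrightarrow> mat2 a b c d) F"
  unfolding mat2_def by (intro tendsto_vec_lambda) (auto simp: assms)

lemma tendsto_matrix_mult:
  fixes f :: "'b \<Rightarrow> 'a::real_normed_algebra_1^'n^'m" and g :: "'b \<Rightarrow> 'a^'p^'n"
  assumes "(f \<longlongrightarrow> X) F" "(g \<longlongrightarrow> Y) F"
  shows "((\<lambda>j. f j ** g j) \<longlongrightarrow> X ** Y) F"
  unfolding matrix_matrix_mult_def by (intro tendsto_intros assms)

lemma tendsto_det2:
  fixes f :: "'b \<Rightarrow> cmat2"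
  assumes "(f \<longlongrightarrow> X) F" shows "((\<lambda>j. det (f j)) \<longlongrightarrow> det X) F"
  unfolding det_2 by (intro tendsto_intros assms)

definition adj2 :: "cmat2 \<Rightarrow> cmat2" where
  "adj2 X = mat2 (X$2$2) (- X$1$2) (- X$2$1) (X$1$1)"

lemma adj2_mat2 [simp]: "adj2 (mat2 a b c d) = mat2 d (- b) (- c) a"
  by (simp add: adj2_def)

lemma det_adj2 [simp]: "det (adj2 X) = det X"
  by (simp add: adj2_def det_2 mult.commute)

lemma mult_adj2:
  assumes "det X = 1" shows "X ** adj2 X = mat 1" and "adj2 X ** X = mat 1"
proof -
  obtain a b c d where X: "X = mat2 a b c d" by (rule mat2_cases)
  show "X ** adj2 X = mat 1" "adj2 X ** X = mat 1"
    using assms by (simp_all add: X mat2_mult mat2_one algebra_simps)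
qed

lemma mult_adj2_eq_one_iff:
  assumes "det B = 1" shows "A ** adj2 B = mat 1 \<longleftrightarrow> A = B"
proof
  assume "A ** adj2 B = mat 1"
  then have "A ** (adj2 B ** B) = B" by (simp add: matrix_mul_assoc)
  then show "A = B" by (simp add: mult_adj2(2)[OF assms])
qed (simp add: mult_adj2(1)[OF assms])

lemma adj2_mult: "adj2 (X ** Y) = adj2 Y ** adj2 X"
proof -
  obtain a b c d where X: "X = mat2 a b c d" by (rule mat2_cases)
  obtain a' b' c' d' where Y: "Y = mat2 a' b' c' d'" by (rule mat2_cases)
  show ?thesis by (simp add: X Y mat2_mult algebra_simps)
qed

lemma trace_conj_adj2:
  assumes "det D = 1" shows "trace (D ** X ** adj2 D) = trace X"
  by (metis assms trace_mul_sym matrix_mul_assoc mult_adj2(2) matrix_mul_lid)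

lemma tendsto_adj2:
  fixes f :: "'b \<Rightarrow> cmat2"
  assumes "(f \<longlongrightarrow> X) F" shows "((\<lambda>j. adj2 (f j)) \<longlongrightarrow> adj2 X) F"
  unfolding adj2_def by (intro tendsto_mat2 tendsto_intros assms)

lemma mpow_add: "mpow A (m + n) = mpow A m ** mpow A n"
  by (induction m) (simp_all add: matrix_mul_assoc)

lemma mpow_Suc_right: "mpow A (Suc n) = mpow A n ** A"
  using mpow_add[of A n 1] by simp

lemma det_mpow: "det (mpow A n) = det A ^ n"
  by (induction n) (simp_all add: det_mul)

section \<open>Semigroups with compact closure\<close>

definition mult_closed :: "cmat2 set \<Rightarrow> bool" where
  "mult_closed G \<longleftrightarrow> (\<forall>X\<in>G. \<forall>Y\<in>G. X ** Y \<in> G)"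

lemma mult_closed_semigroup_gen: "mult_closed (semigroup_gen S)"
  by (simp add: mult_closed_def semigroup_gen.mult)

lemma mult_mpow_mem:
  assumes "mult_closed G" "A \<in> G" "B \<in> G" shows "A ** mpow B n \<in> G"
proof (induction n)
  case 0 show ?case using assms(2) by simp
next
  case (Suc n)
  have "A ** mpow B (Suc n) = (A ** mpow B n) ** B"
    by (simp only: mpow_Suc_right matrix_mul_assoc)
  then show ?case using Suc assms by (simp add: mult_closed_def)
qed

lemma mpow_Suc_mem: "mult_closed G \<Longrightarrow> A \<in> G \<Longrightarrow> mpow A (Suc n) \<in> G"
  by (simp add: mult_mpow_mem)

lemma mult_closed_closure:
  assumes "mult_closed G" shows "mult_closed (closure G)"
  unfolding mult_closed_def
proof (intro ballI)
  fix X Y assume "X \<in> closure G" "Y \<in> closure G"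
  then obtain x y
    where x: "\<forall>n. x n \<in> G" "x \<longlonglongrightarrow> X" and y: "\<forall>n. y n \<in> G" "y \<longlonglongrightarrow> Y"
    unfolding closure_sequential by blast
  have "\<forall>n. x n ** y n \<in> G" using assms x y by (simp add: mult_closed_def)
  moreover have "(\<lambda>n. x n ** y n) \<longlonglongrightarrow> X ** Y" using x y by (intro tendsto_matrix_mult)
  ultimately show "X ** Y \<in> closure G"
    unfolding closure_sequential by (intro exI[of _ "\<lambda>n. x n ** y n"]) simp
qed

lemma bounded_mpow_if_compact_closure:
  assumes "mult_closed G" "compact (closure G)" "A \<in> closure G"
  shows "bounded (range (mpow A))"
proof -
  have "range (mpow A) \<subseteq> insert (mat 1) (closure G)"
  proof
    fix X assume "X \<in> range (mpow A)"
    then obtain n where "X = mpow A n" by blast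
    then show "X \<in> insert (mat 1) (closure G)"
      using mpow_Suc_mem[OF mult_closed_closure[OF assms(1)] assms(3)] by (cases n) auto
  qed
  then show ?thesis
    using compact_imp_bounded[OF assms(2)] by (metis bounded_insert bounded_subset)
qed

lemma mult_adj2_mem_closure:
  assumes G: "mult_closed G" and cpt: "compact (closure G)"
    and A: "A \<in> G" and B: "B \<in> G" and detB: "det B = 1"
  shows "A ** adj2 B \<in> closure G"
proof -
  define f where "f m = mpow B (Suc m)" for m
  have "f m \<in> closure G" for m
    unfolding f_def using mpow_Suc_mem[OF G B] closure_subset by blast
  then obtain l r where r: "strict_mono r" and lim: "(f \<circ> r) \<longlonglongrightarrow> l"
    using compact_imp_seq_compact[OF cpt] unfolding seq_compact_def by metis
  have det_f: "det (f m) = 1" for m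
    unfolding f_def det_mpow detB by simp
  have "(\<lambda>j. det ((f \<circ> r) j)) \<longlonglongrightarrow> det l" by (rule tendsto_det2[OF lim])
  then have det_l: "det l = 1"
    by (simp add: det_f LIMSEQ_const_iff)
  define e where "e j = r (Suc j) - Suc (r j)" for j
  have "r (Suc j) = e j + Suc (r j)" for j
    using strict_monoD[OF r, of j "Suc j"] by (simp add: e_def)
  then have mpow_r_Suc: "mpow B (r (Suc j)) = mpow B (e j) ** f (r j)" for j
    unfolding f_def by (metis mpow_add)
  have "mpow B (e j) = adj2 B ** f (r (Suc j)) ** adj2 (f (r j))" for j
  proof -
    have "adj2 B ** f (r (Suc j)) = mpow B (r (Suc j))"
      by (simp add: f_def matrix_mul_assoc mult_adj2(2)[OF detB])
    then show ?thesis
      by (simp add: mpow_r_Suc matrix_mul_assoc[symmetric] mult_adj2(1)[OF det_f])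
  qed
  moreover have
    "(\<lambda>j. adj2 B ** f (r (Suc j)) ** adj2 (f (r j))) \<longlonglongrightarrow> adj2 B ** l ** adj2 l"
    using LIMSEQ_Suc[OF lim] tendsto_adj2[OF lim]
    by (intro tendsto_matrix_mult tendsto_const) (simp_all add: o_def)
  \<comment> \<open>\<open>e j\<close> may vanish and \<open>mat 1\<close> need not lie in \<open>G\<close>, hence the factor \<open>A\<close>\<close>
  ultimately have "(\<lambda>j. A ** mpow B (e j)) \<longlonglongrightarrow> A ** adj2 B"
    using mult_adj2(1)[OF det_l] by (intro tendsto_matrix_mult tendsto_const)
      (simp add: matrix_mul_assoc[symmetric])
  moreover have "A ** mpow B (e j) \<in> G" for j by (rule mult_mpow_mem[OF G A B])
  ultimately show ?thesis
    unfolding closure_sequential by (intro exI[of _ "\<lambda>j. A ** mpow B (e j)"]) simp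
qed

section \<open>Unbounded powers in SL(2,C)\<close>

lemma trace_recurrence:
  fixes A X :: cmat2
  assumes "det A = 1"
  shows "trace (A ** (A ** X)) = trace A * trace (A ** X) - trace X"
proof -
  obtain a b c d where A: "A = mat2 a b c d" by (rule mat2_cases)
  obtain a' b' c' d' where X: "X = mat2 a' b' c' d'" by (rule mat2_cases)
  have "trace A * trace (A ** X) - trace X - trace (A ** (A ** X)) =
      (a * d - b * c - 1) * (a' + d')"
    by (simp add: A X mat2_mult algebra_simps)
  then show ?thesis using assms by (simp add: A)
qed

lemma trace_mpow_eigenvalues:
  assumes "det A = 1" "\<alpha> + \<beta> = trace A" "\<alpha> * \<beta> = 1"
  shows "trace (mpow A n) = \<alpha> ^ n + \<beta> ^ n"
proof (induction n rule: induct_nat_012)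
  case 0 show ?case by (simp add: mat2_one)
next
  case 1 show ?case using assms(2) by simp
next
  case (ge2 n)
  have "trace (mpow A (Suc (Suc n))) = trace A * trace (mpow A (Suc n)) - trace (mpow A n)"
    using trace_recurrence[OF assms(1)] by simp
  also have "\<dots> = (\<alpha> + \<beta>) * (\<alpha> ^ Suc n + \<beta> ^ Suc n) - \<alpha> * \<beta> * (\<alpha> ^ n + \<beta> ^ n)"
    using ge2 assms(2,3) by simp
  also have "\<dots> = \<alpha> ^ Suc (Suc n) + \<beta> ^ Suc (Suc n)"
    by (simp add: algebra_simps)
  finally show ?case .
qed

lemma power_sums_unbounded:
  fixes \<alpha> \<beta> :: complex
  assumes "\<alpha> * \<beta> = 1" "norm \<alpha> > 1"
  shows "\<not> bounded (range (\<lambda>n. \<alpha> ^ n + \<beta> ^ n))"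
proof
  assume "bounded (range (\<lambda>n. \<alpha> ^ n + \<beta> ^ n))"
  then obtain C where C: "\<And>n. norm (\<alpha> ^ n + \<beta> ^ n) \<le> C"
    unfolding bounded_iff by blast
  have "norm \<alpha> * norm \<beta> = 1"
    using arg_cong[OF assms(1), of norm] by (simp add: norm_mult)
  then have "norm \<beta> \<le> 1"
    using assms(2) by (metis less_le_not_le mult_le_cancel_right1 norm_ge_zero less_imp_le)
  have "norm \<alpha> ^ n \<le> C + 1" for n
  proof -
    have "norm \<alpha> ^ n \<le> norm (\<alpha> ^ n + \<beta> ^ n) + norm (\<beta> ^ n)"
      using norm_triangle_ineq4[of "\<alpha> ^ n + \<beta> ^ n" "\<beta> ^ n"] by (simp add: norm_power)
    moreover have "norm (\<beta> ^ n) \<le> 1"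
      using \<open>norm \<beta> \<le> 1\<close> by (simp add: norm_power power_le_one)
    ultimately show ?thesis using C[of n] by linarith
  qed
  moreover obtain n where "C + 1 < norm \<alpha> ^ n"
    using real_arch_pow[OF assms(2)] by blast
  ultimately show False by (meson not_le)
qed

lemma bounded_power_sums_imp_norm_eq_1:
  fixes \<alpha> \<beta> :: complex
  assumes "\<alpha> * \<beta> = 1" "bounded (range (\<lambda>n. \<alpha> ^ n + \<beta> ^ n))"
  shows "norm \<alpha> = 1"
proof (rule ccontr)
  assume "norm \<alpha> \<noteq> 1"
  have "norm \<alpha> * norm \<beta> = 1"
    using arg_cong[OF assms(1), of norm] by (simp add: norm_mult)
  with \<open>norm \<alpha> \<noteq> 1\<close> consider "norm \<alpha> > 1" | "norm \<beta> > 1"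
    using mult_left_mono[of "norm \<beta>" 1 "norm \<alpha>"] by (smt (verit) norm_ge_zero)
  then show False
  proof cases
    case 1 then show False using power_sums_unbounded assms by blast
  next
    case 2 then show False
      using power_sums_unbounded[of \<beta> \<alpha>] assms by (simp add: mult.commute add.commute)
  qed
qed

lemma unbounded_mpow_nonreal_trace:
  assumes "det A = 1" "Im (trace A) \<noteq> 0"
  shows "\<not> bounded (range (mpow A))"
proof
  assume "bounded (range (mpow A))"
  then obtain C where C: "\<And>n. norm (mpow A n) \<le> C"
    unfolding bounded_iff by blast
  define t where "t = trace A"
  define \<alpha> where "\<alpha> = (t + csqrt (t\<^sup>2 - 4)) / 2"
  define \<beta> where "\<beta> = (t - csqrt (t\<^sup>2 - 4)) / 2"
  have sum: "\<alpha> + \<beta> = t" unfolding \<alpha>_def \<beta>_def by (simp add: field_simps)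
  have prod: "\<alpha> * \<beta> = 1" unfolding \<alpha>_def \<beta>_def
    by (simp add: field_simps power2_eq_square[symmetric])
  have "norm (\<alpha> ^ n + \<beta> ^ n) \<le> 2 * C" for n
    using norm_trace_le[of "mpow A n"] C[of n]
      trace_mpow_eigenvalues[OF assms(1) sum[unfolded t_def] prod] by simp
  then have "bounded (range (\<lambda>n. \<alpha> ^ n + \<beta> ^ n))"
    unfolding bounded_iff by blast
  then have "norm \<alpha> = 1"
    using bounded_power_sums_imp_norm_eq_1[OF prod] by blast
  then have "\<alpha> * cnj \<alpha> = 1"
    using complex_norm_square[of \<alpha>] by simp
  then have "\<beta> = cnj \<alpha>"
    using prod by (metis mult.assoc mult.commute mult_1_left)
  then have "Im t = 0"
    using sum by auto
  then show False
    using assms(2) by (simp add: t_def)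
qed

lemma mpow_one_plus_nilpotent:
  assumes "N ** N = 0"
  shows "mpow (mat 1 + N) n = mat 1 + real n *\<^sub>R N"
proof (induction n)
  case 0 show ?case by simp
next
  case (Suc n)
  have "N ** (real n *\<^sub>R N) = 0"
    by (simp add: matrix_scalar_ac scalar_matrix_assoc[symmetric] assms)
  then have "N ** (mat 1 + real n *\<^sub>R N) = N"
    by (simp add: matrix_add_ldistrib)
  then have "(mat 1 + N) ** (mat 1 + real n *\<^sub>R N) = mat 1 + real (Suc n) *\<^sub>R N"
    by (simp add: matrix_add_rdistrib scaleR_add_left)
  then show ?case by (simp add: Suc)
qed

lemma parabolic_nilpotent:
  fixes A :: cmat2
  assumes "det A = 1" "trace A = 2"
  shows "(A - mat 1) ** (A - mat 1) = 0"
proof -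
  obtain a b c d where A: "A = mat2 a b c d" by (rule mat2_cases)
  have "a + d = 2" and det: "a * d - b * c = 1"
    using assms by (simp_all add: A)
  then have d: "d = 2 - a"
    by (metis add_diff_cancel_left')
  have bc: "b * c = a * (2 - a) - 1"
    using det unfolding d by (simp add: algebra_simps)
  have "(a - 1) * (a - 1) + b * c = 0" "(d - 1) * (d - 1) + b * c = 0"
    unfolding bc d by algebra+
  then show ?thesis
    by (simp add: A mat2_one mat2_diff mat2_mult mat2_zero d algebra_simps)
qed

lemma unbounded_mpow_parabolic:
  assumes "det A = 1" "trace A = 2" "A \<noteq> mat 1"
  shows "\<not> bounded (range (mpow A))"
proof
  assume "bounded (range (mpow A))"
  then obtain C where C: "\<And>n. norm (mpow A n) \<le> C"
    unfolding bounded_iff by blast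
  define N where "N = A - mat 1"
  have "norm N > 0" using assms(3) by (simp add: N_def)
  have "real n * norm N \<le> C + norm (mat 1 :: cmat2)" for n
  proof -
    have "mpow A n = mat 1 + real n *\<^sub>R N"
      using mpow_one_plus_nilpotent[OF parabolic_nilpotent[OF assms(1,2)]] by (simp add: N_def)
    then have "real n * norm N \<le> norm (mpow A n) + norm (mat 1 :: cmat2)"
      using norm_triangle_ineq4[of "mpow A n" "mat 1"] by simp
    then show ?thesis using C[of n] by linarith
  qed
  then show False
    using ex_less_of_nat_mult[OF \<open>norm N > 0\<close>] by (meson not_le)
qed

section \<open>The transfer matrix\<close>

lemma mexp_nilpotent:
  assumes "X ** X = 0"
  shows "mexp X = mat 1 + X"
proof -
  have "mpow X (Suc (Suc m)) = 0" for m
    by (simp add: matrix_mul_assoc assms)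
  then have "mpow X n = 0" if "n \<notin> {0, 1}" for n
    using that by (metis One_nat_def insertCI not0_implies_Suc)
  then have "mexp X = (\<Sum>n\<in>{0, 1}. (1 / fact n) *\<^sub>R mpow X n)"
    unfolding mexp_def by (intro suminf_finite) auto
  then show ?thesis by simp
qed

definition exp_B23 :: "complex \<Rightarrow> cmat2" where
  "exp_B23 c = mexp (msmult c (B2 + B3))"

lemma exp_B23_eq: "exp_B23 c = mat2 (1 + \<i> * c) (\<i> * c) (- \<i> * c) (1 - \<i> * c)"
proof -
  have N: "msmult c (B2 + B3) = mat2 (\<i> * c) (\<i> * c) (- \<i> * c) (- \<i> * c)"
    unfolding B2_def B3_def by (simp add: mat2_add msmult_mat2 mult.commute)
  have "msmult c (B2 + B3) ** msmult c (B2 + B3) = 0"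
    unfolding N mat2_mult mat2_zero by (simp add: algebra_simps)
  then show ?thesis
    unfolding exp_B23_def by (simp add: mexp_nilpotent N mat2_one mat2_add)
qed

lemma exp_B23_add: "exp_B23 s ** exp_B23 t = exp_B23 (s + t)"
  by (simp add: exp_B23_eq mat2_mult algebra_simps)

lemma adj2_exp_B23: "adj2 (exp_B23 c) = exp_B23 (- c)"
  by (simp add: exp_B23_eq)

lemma det_exp_B23: "det (exp_B23 c) = 1"
  by (simp add: exp_B23_eq algebra_simps)

lemma trace_exp_B23: "trace (exp_B23 c) = 2"
  by (simp add: exp_B23_eq)

lemma Tmat_factor:
  assumes "k = arccos (- E / 2)"
  shows "Tmat E \<epsilon> \<delta> x = mat2 (exp (- \<i> * of_real k)) 0 0 (exp (\<i> * of_real k)) **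
    exp_B23 ((\<i> * of_real \<delta> + of_real (\<epsilon> * x)) / of_real (2 * sin k))"
  unfolding Tmat_def Let_def exp_B23_def assms ..

lemma det_exp_diag: "det (mat2 (exp (- \<i> * of_real k)) 0 0 (exp (\<i> * of_real k))) = 1"
  by (simp add: exp_add[symmetric])

lemma det_Tmat: "det (Tmat E \<epsilon> \<delta> x) = 1"
  by (simp add: Tmat_factor[OF refl] det_mul det_exp_B23 exp_add[symmetric])

lemma trace_Tmat:
  assumes "-2 < E" "E < 2"
  shows "trace (Tmat E \<epsilon> \<delta> x) = of_real (\<epsilon> * x - E) + \<i> * of_real \<delta>"
proof -
  define k where "k = arccos (- E / 2)"
  define c where "c = (\<i> * of_real \<delta> + of_real (\<epsilon> * x)) / of_real (2 * sin k)"
  have "0 < k" "k < pi"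
    unfolding k_def using arccos_lt_bounded[of "- E / 2"] assms by auto
  then have "sin k \<noteq> 0" by (simp add: sin_gt_zero less_imp_neq[symmetric])
  have "cos k = - E / 2"
    unfolding k_def using assms by (intro cos_arccos) auto
  have "trace (Tmat E \<epsilon> \<delta> x) =
      exp (- \<i> * of_real k) * (1 + \<i> * c) + exp (\<i> * of_real k) * (1 - \<i> * c)"
    unfolding Tmat_factor[OF k_def] c_def[symmetric] exp_B23_eq mat2_mult trace_mat2 by simp
  also have "\<dots> = 2 * of_real (cos k) + 2 * of_real (sin k) * c"
    by (simp add: complex_eq_iff exp_minus Re_exp Im_exp algebra_simps)
  also have "\<dots> = of_real (\<epsilon> * x - E) + \<i> * of_real \<delta>"
    using \<open>sin k \<noteq> 0\<close> unfolding \<open>cos k = - E / 2\<close> by (simp add: c_def field_simps)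
  finally show ?thesis .
qed

lemma inj_Tmat:
  assumes "-2 < E" "E < 2" "\<epsilon> \<noteq> 0"
  shows "inj (Tmat E \<epsilon> \<delta>)"
proof
  fix a b assume "Tmat E \<epsilon> \<delta> a = Tmat E \<epsilon> \<delta> b"
  then have "trace (Tmat E \<epsilon> \<delta> a) = trace (Tmat E \<epsilon> \<delta> b)" by simp
  then show "a = b" using assms by (simp add: trace_Tmat complex_eq_iff)
qed

lemma trace_Tmat_mult_adj2: "trace (Tmat E \<epsilon> \<delta> a ** adj2 (Tmat E \<epsilon> \<delta> b)) = 2"
proof -
  define k where "k = arccos (- E / 2)"
  define D where "D = mat2 (exp (- \<i> * of_real k)) 0 0 (exp (\<i> * of_real k))"
  define c where "c x = (\<i> * of_real \<delta> + of_real (\<epsilon> * x)) / of_real (2 * sin k)" for x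
  have "Tmat E \<epsilon> \<delta> a ** adj2 (Tmat E \<epsilon> \<delta> b) =
      D ** exp_B23 (c a) ** (exp_B23 (- c b) ** adj2 D)"
    by (simp add: Tmat_factor[OF k_def] D_def c_def adj2_mult adj2_exp_B23 del: adj2_mat2)
  also have "\<dots> = D ** (exp_B23 (c a) ** exp_B23 (- c b)) ** adj2 D"
    by (simp only: matrix_mul_assoc)
  also have "\<dots> = D ** exp_B23 (c a - c b) ** adj2 D"
    by (simp add: exp_B23_add)
  moreover have "det D = 1"
    unfolding D_def by (rule det_exp_diag)
  ultimately show ?thesis
    by (simp add: trace_conj_adj2 trace_exp_B23)
qed

lemma continuous_Tmat: "continuous_on UNIV (Tmat E \<epsilon> \<delta>)"
proof -
  define k where "k = arccos (- E / 2)"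
  have "Tmat E \<epsilon> \<delta> = (\<lambda>x. mat2 (exp (- \<i> * of_real k)) 0 0 (exp (\<i> * of_real k)) **
    exp_B23 ((\<i> * of_real \<delta> + of_real (\<epsilon> * x)) / of_real (2 * sin k)))"
    by (intro ext Tmat_factor k_def)
  show ?thesis
    unfolding \<open>Tmat E \<epsilon> \<delta> = _\<close> continuous_on_def exp_B23_eq mat2_mult divide_inverse
    by (intro ballI tendsto_mat2 tendsto_intros)
qed

section \<open>Supports of distributions\<close>

lemma meas_support_nonempty:
  fixes N :: "'a::second_countable_topology measure"
  assumes "prob_space N" "sets N = sets borel"
  shows "meas_support N \<noteq> {}"
proof
  assume "meas_support N = {}"
  define F where "F = {U. open U \<and> emeasure N U = 0}"
  have "\<Union>F = UNIV"
    using \<open>meas_support N = {}\<close> unfolding meas_support_def F_def by (auto simp: not_less)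
  obtain F' where F': "F' \<subseteq> F" "countable F'" "\<Union>F' = \<Union>F"
    using Lindelof[of F] unfolding F_def by blast
  have "\<Union>F' \<in> null_sets N"
  proof (rule null_sets_UN'[OF F'(2), of id, simplified])
    fix U assume "U \<in> F'"
    then have "open U" "emeasure N U = 0" using F'(1) unfolding F_def by auto
    then show "U \<in> null_sets N" using assms(2) by auto
  qed
  then have "emeasure N (space N) = 0"
    using F' \<open>\<Union>F = UNIV\<close> sets_eq_imp_space_eq[OF assms(2)] by auto
  then show False using prob_space.emeasure_space_1[OF assms(1)] by simp
qed

lemma meas_support_distr_comp:
  fixes w :: "'s \<Rightarrow> 'a::topological_space" and T :: "'a \<Rightarrow> 'b::topological_space"
  assumes w: "w \<in> borel_measurable M" and T: "continuous_on UNIV T"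
    and a: "a \<in> meas_support (distr M borel w)"
  shows "T a \<in> meas_support (distr M borel (\<lambda>\<sigma>. T (w \<sigma>)))"
  unfolding meas_support_def
proof (intro CollectI allI impI)
  fix U assume U: "open U \<and> T a \<in> U"
  have Tw: "(\<lambda>\<sigma>. T (w \<sigma>)) \<in> borel_measurable M"
    using measurable_compose[OF w borel_measurable_continuous_onI[OF T]] by (simp add: o_def)
  have "open (T -` U)" using T U by (simp add: continuous_on_open_vimage)
  have "emeasure (distr M borel (\<lambda>\<sigma>. T (w \<sigma>))) U = emeasure M (w -` (T -` U) \<inter> space M)"
    using U by (simp add: emeasure_distr[OF Tw] vimage_def)
  also have "\<dots> = emeasure (distr M borel w) (T -` U)"
    using \<open>open (T -` U)\<close> by (simp add: emeasure_distr[OF w])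
  finally show "0 < emeasure (distr M borel (\<lambda>\<sigma>. T (w \<sigma>))) U"
    using a \<open>open (T -` U)\<close> U unfolding meas_support_def by auto
qed

theorem proposition6:
  fixes M :: "'s measure" and w :: "'s \<Rightarrow> real" and E \<epsilon> \<delta> :: real
  assumes "prob_space M"
    and "w \<in> borel_measurable M"
    and "compact (meas_support (distr M borel w))"
    and "-2 < E" and "E < 2"
    and "\<delta> \<noteq> 0 \<or> (\<epsilon> \<noteq> 0 \<and> (\<exists>a b. a \<noteq> b \<and> a \<in> meas_support (distr M borel w)
                                        \<and> b \<in> meas_support (distr M borel w)))"
  shows "\<not> compact (closure (semigroup_gen
            (meas_support (distr M borel (\<lambda>\<sigma>. Tmat E \<epsilon> \<delta> (w \<sigma>))))))"
proof
  let ?S = "meas_support (distr M borel w)"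
  let ?G = "semigroup_gen (meas_support (distr M borel (\<lambda>\<sigma>. Tmat E \<epsilon> \<delta> (w \<sigma>))))"
  assume cpt: "compact (closure ?G)"
  have T_mem: "Tmat E \<epsilon> \<delta> a \<in> ?G" if "a \<in> ?S" for a
    using meas_support_distr_comp[OF assms(2) continuous_Tmat that] by (rule semigroup_gen.base)
  have bounded: "bounded (range (mpow A))" if "A \<in> closure ?G" for A
    using bounded_mpow_if_compact_closure[OF mult_closed_semigroup_gen cpt that] .
  from assms(6) show False
  proof (elim disjE conjE exE)
    assume "\<delta> \<noteq> 0"
    obtain a where "a \<in> ?S"
      using meas_support_nonempty[OF prob_space.prob_space_distr[OF assms(1,2)]] by auto
    moreover have "Im (trace (Tmat E \<epsilon> \<delta> a)) \<noteq> 0"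
      using trace_Tmat[OF assms(4,5)] \<open>\<delta> \<noteq> 0\<close> by simp
    ultimately show False
      using unbounded_mpow_nonreal_trace[OF det_Tmat] bounded T_mem closure_subset by blast
  next
    fix a b assume "\<epsilon> \<noteq> 0" "a \<noteq> b" "a \<in> ?S" "b \<in> ?S"
    let ?A = "Tmat E \<epsilon> \<delta> a ** adj2 (Tmat E \<epsilon> \<delta> b)"
    have "?A \<noteq> mat 1"
      using inj_Tmat[OF assms(4,5) \<open>\<epsilon> \<noteq> 0\<close>] \<open>a \<noteq> b\<close>
      by (simp add: mult_adj2_eq_one_iff det_Tmat inj_eq)
    moreover have "?A \<in> closure ?G"
      using mult_adj2_mem_closure[OF mult_closed_semigroup_gen cpt] T_mem det_Tmat
        \<open>a \<in> ?S\<close> \<open>b \<in> ?S\<close> by blast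
    moreover have "det ?A = 1"
      by (simp add: det_mul det_Tmat)
    ultimately show False
      using unbounded_mpow_parabolic trace_Tmat_mult_adj2 bounded by blast
  qed
qed

end
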